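(* Let $G_1=(V,E_1)$ and $G_2=(V,E_2)$ be simple graphs on the same finite vertex set with degree sequences $d_1$ and $d_2$. If $d_1\succeq d_2$, then $\dim\mathcal{A}(\widehat G_1)\le\dim\mathcal{A}(\widehat G_2)$.
   Context: For real sequences $a,b$ of length $n$, with $a[i]$, $b[i]$ denoting the $i$-th largest components, $a$ majorizes $b$, written $a\succeq b$, if $\sum_{i=1}^k a[i]\ge\sum_{i=1}^k b[i]$ for $k=1,\dots,n$, with equality for $k=n$. For a simple graph $G=(V,E)$, $\widehat G$ is the complete graph $(V,\binom{V}{2})$ with pairs in $E$ colored red and the other pairs colored blue. For a 2-colored graph $H=(V,F)$, the alternating cone $\mathcal{A}(H)\subseteq\mathbb{R}^F$ is the set of $x\ge0$ such that at each vertex the sum of $x(e)$ over incident red edges equals the sum over incident blue edges. *)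

theory Defs
  imports "HOL-Analysis.Analysis" "HOL-Library.Multiset"
begin

definition decr_sort :: "real list \<Rightarrow> real list" where
  "decr_sort a = rev (sort a)"

definition majorizes :: "real list \<Rightarrow> real list \<Rightarrow> bool" where
  "majorizes a b \<longleftrightarrow> length a = length b \<and>
     (\<forall>k\<in>{1..length a}. sum_list (take k (decr_sort b)) \<le> sum_list (take k (decr_sort a))) \<and>
     sum_list a = sum_list b"

definition all_pairs :: "'a set set" where
  "all_pairs = {{u, v} | u v. u \<noteq> v}"

definition simple_graph :: "'a set set \<Rightarrow> bool" where
  "simple_graph E \<longleftrightarrow> E \<subseteq> all_pairs"

definition degree :: "'a set set \<Rightarrow> 'a \<Rightarrow> nat" where
  "degree E v = card {e \<in> E. v \<in> e}"

text \<open>Degree sequence (as a list; order is irrelevant for majorization).\<close>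
definition degree_seq :: "('a::finite) set set \<Rightarrow> real list" where
  "degree_seq E = sorted_list_of_multiset (image_mset (\<lambda>v. real (degree E v)) (mset_set (UNIV :: 'a set)))"

text \<open>Alternating cone of the 2-coloured complete graph \<open>\<widehat>G\<close>: pairs in E are red,
  the other pairs blue.  Vectors live in \<open>\<real>^{'a set}\<close> and are required to vanish
  outside the set of pairs, so that the cone is a subset of \<open>\<real>^{binom V 2}\<close>.\<close>
definition alternating_cone_hat :: "('a::finite) set set \<Rightarrow> (real ^ ('a set)) set" where
  "alternating_cone_hat E = {x.
     (\<forall>e. e \<notin> all_pairs \<longrightarrow> x $ e = 0) \<and>
     (\<forall>e. x $ e \<ge> 0) \<and>
     (\<forall>v. (\<Sum>e\<in>{e\<in>all_pairs. v \<in> e \<and> e \<in> E}. x $ e) =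
          (\<Sum>e\<in>{e\<in>all_pairs. v \<in> e \<and> e \<notin> E}. x $ e))}"

end

theory Submission
  imports Defs "HOL-Combinatorics.Permutations"
begin

(* Negating the coordinates of the red pairs maps the alternating cone of \widehat G into the
   space W(S) of weightings of the pairs that vanish outside S and sum to zero at every vertex,
   where S = S(G) is the support of the cone.  The cone contains a vector that is positive on all
   of S(G), so it spans this image and dim A(\widehat G) = dim W(S(G)); moreover dim W(S) can only
   grow when S grows, up to a relabelling of the vertices.

   S(G) is also the set of pairs on which some point of the degree polytope
   P(d) = {y in [0,1]^pairs with vertex sums d}, d the degree sequence of G, is fractional:
   the points of P(d) differ from the indicator vector of E by sign-flipped cone vectors, and
   conversely the indicator vector plus a small sign-flipped cone vector lies in P(d).
   By Muirhead's lemma, d1 majorizing d2 is carried to d2 by finitely many transfers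
   d -> t d + (1 - t) (d o pi), pi a transposition and 0 < t <= 1.  Each transfer can only enlarge
   the fractional support: y -> t y + (1 - t) (y o pi) maps P(d) into the polytope of the new
   sequence, and its image is integral only where y is. *)

definition vertex_sum :: "real ^ ('a::finite set) \<Rightarrow> 'a \<Rightarrow> real" where
  "vertex_sum x v = (\<Sum>e\<in>{e\<in>all_pairs. v \<in> e}. x $ e)"

lemma vertex_sum_add [simp]: "vertex_sum (x + y) v = vertex_sum x v + vertex_sum y v"
  by (simp add: vertex_sum_def sum.distrib)

lemma vertex_sum_diff [simp]: "vertex_sum (x - y) v = vertex_sum x v - vertex_sum y v"
  by (simp add: vertex_sum_def sum_subtractf)

lemma vertex_sum_zero [simp]: "vertex_sum 0 v = 0"
  by (simp add: vertex_sum_def)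

lemma vertex_sum_scaleR [simp]: "vertex_sum (c *\<^sub>R x) v = c * vertex_sum x v"
  by (simp add: vertex_sum_def sum_distrib_left)

definition flip_sign :: "('a::finite) set set \<Rightarrow> real ^ ('a set) \<Rightarrow> real ^ ('a set)" where
  "flip_sign E x = (\<chi> e. if e \<in> E then - (x $ e) else x $ e)"

lemma flip_sign_nth [simp]: "flip_sign E x $ e = (if e \<in> E then - (x $ e) else x $ e)"
  by (simp add: flip_sign_def)

lemma flip_sign_flip_sign [simp]: "flip_sign E (flip_sign E x) = x"
  by (simp add: vec_eq_iff)

lemma linear_flip_sign: "linear (flip_sign E)"
  by (rule linearI) (auto simp: vec_eq_iff)

lemma inj_flip_sign: "inj (flip_sign E)"
  by (metis flip_sign_flip_sign injI)

lemma vertex_sum_flip_sign: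
  "vertex_sum (flip_sign E x) v =
     (\<Sum>e\<in>{e\<in>all_pairs. v \<in> e \<and> e \<notin> E}. x $ e) - (\<Sum>e\<in>{e\<in>all_pairs. v \<in> e \<and> e \<in> E}. x $ e)"
proof -
  have "vertex_sum (flip_sign E x) v =
      (\<Sum>e\<in>{e\<in>all_pairs. v \<in> e} \<inter> {e. e \<in> E}. - (x $ e)) + (\<Sum>e\<in>{e\<in>all_pairs. v \<in> e} \<inter> - {e. e \<in> E}. x $ e)"
    unfolding vertex_sum_def flip_sign_nth by (rule sum.If_cases) simp
  also have "{e\<in>all_pairs. v \<in> e} \<inter> {e. e \<in> E} = {e\<in>all_pairs. v \<in> e \<and> e \<in> E}" by auto
  also have "{e\<in>all_pairs. v \<in> e} \<inter> - {e. e \<in> E} = {e\<in>all_pairs. v \<in> e \<and> e \<notin> E}" by auto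
  finally show ?thesis by (simp add: sum_negf)
qed

lemma alternating_cone_hat_iff:
  "x \<in> alternating_cone_hat E \<longleftrightarrow>
     (\<forall>e. e \<notin> all_pairs \<longrightarrow> x $ e = 0) \<and> (\<forall>e. 0 \<le> x $ e) \<and> (\<forall>v. vertex_sum (flip_sign E x) v = 0)"
  unfolding alternating_cone_hat_def vertex_sum_flip_sign by auto

lemma alternating_cone_hat_nonneg: "x \<in> alternating_cone_hat E \<Longrightarrow> 0 \<le> x $ e"
  by (simp add: alternating_cone_hat_iff)

lemma alternating_cone_hat_sum:
  assumes "\<And>i. i \<in> I \<Longrightarrow> f i \<in> alternating_cone_hat E"
  shows "sum f I \<in> alternating_cone_hat E"
  using assms
proof (induction I rule: infinite_finite_induct)
  case (insert i I)
  then show ?case by (auto simp: alternating_cone_hat_iff linear_add[OF linear_flip_sign])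
qed (auto simp: alternating_cone_hat_iff linear_0[OF linear_flip_sign])

definition cone_support :: "('a::finite) set set \<Rightarrow> 'a set set" where
  "cone_support E = {e. \<exists>x\<in>alternating_cone_hat E. x $ e \<noteq> 0}"

lemma cone_support_subset_all_pairs: "cone_support E \<subseteq> all_pairs"
  by (auto simp: cone_support_def alternating_cone_hat_def)

lemma exists_cone_positive_on_support:
  obtains x where "x \<in> alternating_cone_hat E" "\<And>e. e \<in> cone_support E \<Longrightarrow> 0 < x $ e"
proof
  define w where "w e = (SOME x. x \<in> alternating_cone_hat E \<and> x $ e \<noteq> 0)" for e
  have w: "w e \<in> alternating_cone_hat E" "w e $ e \<noteq> 0" if "e \<in> cone_support E" for e
    using someI_ex[of "\<lambda>x. x \<in> alternating_cone_hat E \<and> x $ e \<noteq> 0"] that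
    unfolding w_def cone_support_def by auto
  show "sum w (cone_support E) \<in> alternating_cone_hat E"
    using w by (auto intro: alternating_cone_hat_sum)
  fix e assume e: "e \<in> cone_support E"
  have "0 < w e $ e" using w[OF e] alternating_cone_hat_nonneg[of "w e"] by (simp add: order_less_le)
  also have "\<dots> \<le> (\<Sum>e'\<in>cone_support E. w e' $ e)"
    using e by (intro member_le_sum) (auto intro: alternating_cone_hat_nonneg[OF w(1)])
  finally show "0 < sum w (cone_support E) $ e" by simp
qed

definition zero_sum_space :: "('a::finite) set set \<Rightarrow> (real ^ ('a set)) set" where
  "zero_sum_space S = {z. (\<forall>e. e \<notin> S \<longrightarrow> z $ e = 0) \<and> (\<forall>v. vertex_sum z v = 0)}"

lemma alternating_cone_hat_subset_zero_sum_space: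
  "alternating_cone_hat E \<subseteq> flip_sign E ` zero_sum_space (cone_support E)"
proof
  fix x assume x: "x \<in> alternating_cone_hat E"
  then have "flip_sign E x \<in> zero_sum_space (cone_support E)"
    by (auto simp: zero_sum_space_def alternating_cone_hat_iff cone_support_def)
  then show "x \<in> flip_sign E ` zero_sum_space (cone_support E)"
    by (metis flip_sign_flip_sign image_eqI)
qed

lemma exists_small_positive_perturbation:
  fixes x w :: "'b \<Rightarrow> real"
  assumes "finite S" and "\<And>e. e \<in> S \<Longrightarrow> 0 < x e"
  obtains t :: real where "0 < t" "\<And>e. e \<in> S \<Longrightarrow> 0 < x e + t * w e"
proof -
  have "\<forall>\<^sub>F t in at_right 0. \<forall>e\<in>S. 0 < x e + t * w e"
  proof (intro eventually_ball_finite ballI)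
    fix e assume "e \<in> S"
    have "((\<lambda>t. x e + t * w e) \<longlongrightarrow> x e + 0 * w e) (at_right 0)"
      by (intro tendsto_intros)
    then show "\<forall>\<^sub>F t in at_right 0. 0 < x e + t * w e"
      using assms(2)[OF \<open>e \<in> S\<close>] by (auto dest: order_tendstoD)
  qed (rule assms(1))
  moreover have "\<forall>\<^sub>F t in at_right (0::real). 0 < t" by (simp add: eventually_at_right_less)
  ultimately have "\<forall>\<^sub>F t in at_right (0::real). 0 < t \<and> (\<forall>e\<in>S. 0 < x e + t * w e)"
    by eventually_elim simp
  then show thesis
    using eventually_happens'[OF trivial_limit_at_right_real] that by blast
qed

lemma alternating_cone_hat_add_small:
  assumes x: "x \<in> alternating_cone_hat E" and pos: "\<And>e. e \<in> cone_support E \<Longrightarrow> 0 < x $ e"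
    and z: "z \<in> zero_sum_space (cone_support E)"
  obtains t :: real where "0 < t" "x + t *\<^sub>R flip_sign E z \<in> alternating_cone_hat E"
proof -
  let ?y = "flip_sign E z"
  obtain t :: real where t: "0 < t" and t_pos: "\<And>e. e \<in> cone_support E \<Longrightarrow> 0 < x $ e + t * ?y $ e"
    using exists_small_positive_perturbation[of "cone_support E" "($) x" "($) ?y"] pos by auto
  have off: "z $ e = 0" if "e \<notin> cone_support E" for e
    using z that by (simp add: zero_sum_space_def)
  have "x + t *\<^sub>R ?y \<in> alternating_cone_hat E"
    unfolding alternating_cone_hat_iff
  proof (intro conjI allI impI)
    fix e :: "'a set"
    show "e \<notin> all_pairs \<Longrightarrow> (x + t *\<^sub>R ?y) $ e = 0"
      using x off cone_support_subset_all_pairs by (auto simp: alternating_cone_hat_iff)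
    show "0 \<le> (x + t *\<^sub>R ?y) $ e"
    proof (cases "e \<in> cone_support E")
      case True
      then show ?thesis using t_pos[of e] by simp
    next
      case False
      then show ?thesis using off[of e] alternating_cone_hat_nonneg[OF x] by simp
    qed
  next
    fix v
    have "flip_sign E (x + t *\<^sub>R ?y) = flip_sign E x + t *\<^sub>R z"
      by (simp add: vec_eq_iff)
    then show "vertex_sum (flip_sign E (x + t *\<^sub>R ?y)) v = 0"
      using x z by (simp add: alternating_cone_hat_iff zero_sum_space_def)
  qed
  with t show thesis by (rule that)
qed

lemma zero_sum_space_subset_span_cone:
  "flip_sign E ` zero_sum_space (cone_support E) \<subseteq> span (alternating_cone_hat E)"
proof
  fix y assume "y \<in> flip_sign E ` zero_sum_space (cone_support E)"
  then obtain z where z: "z \<in> zero_sum_space (cone_support E)" and y: "y = flip_sign E z" by blast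
  obtain x where x: "x \<in> alternating_cone_hat E" "\<And>e. e \<in> cone_support E \<Longrightarrow> 0 < x $ e"
    using exists_cone_positive_on_support by blast
  obtain t :: real where t: "0 < t" "x + t *\<^sub>R y \<in> alternating_cone_hat E"
    using alternating_cone_hat_add_small[OF x z] y by blast
  then have "(1 / t) *\<^sub>R ((x + t *\<^sub>R y) - x) \<in> span (alternating_cone_hat E)"
    using x by (intro span_mul span_diff span_base)
  then show "y \<in> span (alternating_cone_hat E)" using t by simp
qed

lemma dim_alternating_cone_hat:
  "dim (alternating_cone_hat E) = dim (zero_sum_space (cone_support E))"
proof (rule antisym)
  have inj: "inj_on (flip_sign E) A" for A by (rule inj_on_subset[OF inj_flip_sign subset_UNIV])
  have "dim (alternating_cone_hat E) \<le> dim (flip_sign E ` zero_sum_space (cone_support E))"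
    by (rule dim_subset[OF alternating_cone_hat_subset_zero_sum_space])
  also have "\<dots> = dim (zero_sum_space (cone_support E))"
    by (rule dim_image_eq[OF linear_flip_sign inj])
  finally show "dim (alternating_cone_hat E) \<le> dim (zero_sum_space (cone_support E))" .
  have "dim (zero_sum_space (cone_support E)) = dim (flip_sign E ` zero_sum_space (cone_support E))"
    by (rule dim_image_eq[OF linear_flip_sign inj, symmetric])
  also have "\<dots> \<le> dim (span (alternating_cone_hat E))"
    by (rule dim_subset[OF zero_sum_space_subset_span_cone])
  finally show "dim (zero_sum_space (cone_support E)) \<le> dim (alternating_cone_hat E)" by simp
qed

lemma image_in_all_pairs_iff:
  assumes "inj (\<pi> :: 'a \<Rightarrow> 'a)"
  shows "\<pi> ` e \<in> all_pairs \<longleftrightarrow> e \<in> all_pairs"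
proof
  assume "\<pi> ` e \<in> all_pairs"
  then obtain u v where uv: "\<pi> ` e = {u, v}" "u \<noteq> v" by (auto simp: all_pairs_def)
  have "e = {inv \<pi> u, inv \<pi> v}"
    using image_inv_f_f[OF assms, of e] uv(1) by simp
  moreover have "inv \<pi> u \<noteq> inv \<pi> v"
    using uv inv_into_injective[of UNIV \<pi> u v] by blast
  ultimately show "e \<in> all_pairs" by (auto simp: all_pairs_def)
next
  assume "e \<in> all_pairs"
  then obtain u v where "e = {u, v}" "u \<noteq> v" by (auto simp: all_pairs_def)
  then show "\<pi> ` e \<in> all_pairs"
    using injD[OF assms] by (auto simp: all_pairs_def)
qed

definition relabel :: "('a::finite \<Rightarrow> 'a) \<Rightarrow> real ^ ('a set) \<Rightarrow> real ^ ('a set)" where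
  "relabel \<pi> y = (\<chi> e. y $ (\<pi> ` e))"

lemma relabel_nth [simp]: "relabel \<pi> y $ e = y $ (\<pi> ` e)"
  by (simp add: relabel_def)

lemma linear_relabel: "linear (relabel \<pi>)"
  by (rule linearI) (auto simp: vec_eq_iff)

lemma relabel_relabel_inv [simp]: "bij \<pi> \<Longrightarrow> relabel (inv \<pi>) (relabel \<pi> y) = y"
  by (simp add: vec_eq_iff image_comp bij_is_surj surj_f_inv_f)

lemma inj_relabel: "bij \<pi> \<Longrightarrow> inj (relabel \<pi>)"
  by (metis injI relabel_relabel_inv)

lemma image_pairs_containing:
  fixes \<pi> :: "'a \<Rightarrow> 'a"
  assumes "bij \<pi>"
  shows "(`) \<pi> ` {e \<in> all_pairs. v \<in> e} = {e \<in> all_pairs. \<pi> v \<in> e}"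
proof (intro equalityI subsetI)
  have inj: "inj \<pi>" using assms by (rule bij_is_inj)
  fix e assume e: "e \<in> {e \<in> all_pairs. \<pi> v \<in> e}"
  have "e = \<pi> ` (inv \<pi> ` e)"
    using assms by (simp add: bij_is_surj image_f_inv_f)
  moreover have "inv \<pi> ` e \<in> all_pairs"
    using e calculation image_in_all_pairs_iff[OF inj, of "inv \<pi> ` e"] by simp
  moreover have "v \<in> inv \<pi> ` e"
    using e rev_image_eqI[of "\<pi> v" e v "inv \<pi>"] inv_f_f[OF inj] by simp
  ultimately show "e \<in> (`) \<pi> ` {e \<in> all_pairs. v \<in> e}" by blast
qed (use image_in_all_pairs_iff[OF bij_is_inj[OF assms]] in blast)

lemma vertex_sum_relabel:
  assumes "bij \<pi>"
  shows "vertex_sum (relabel \<pi> y) v = vertex_sum y (\<pi> v)"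
proof -
  have "inj_on ((`) \<pi>) A" for A
    using bij_is_inj[OF assms] by (auto intro!: inj_onI simp: inj_image_eq_iff)
  then show ?thesis
    unfolding vertex_sum_def relabel_nth image_pairs_containing[OF assms, symmetric]
    by (simp add: sum.reindex)
qed

lemma relabel_zero_sum_space:
  fixes \<sigma> :: "'a::finite \<Rightarrow> 'a"
  assumes "bij \<sigma>"
  shows "relabel (inv \<sigma>) ` zero_sum_space S \<subseteq> zero_sum_space ((`) \<sigma> ` S)"
proof clarify
  fix z assume z: "z \<in> zero_sum_space S"
  have "inv \<sigma> ` e \<notin> S" if "e \<notin> (`) \<sigma> ` S" for e
    using that assms by (metis bij_is_surj image_f_inv_f image_eqI)
  then show "relabel (inv \<sigma>) z \<in> zero_sum_space ((`) \<sigma> ` S)"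
    using z bij_imp_bij_inv[OF assms]
    by (auto simp: zero_sum_space_def vertex_sum_relabel)
qed

lemma zero_sum_space_mono: "S \<subseteq> T \<Longrightarrow> zero_sum_space S \<subseteq> zero_sum_space T"
  by (auto simp: zero_sum_space_def)

lemma dim_zero_sum_space_le:
  fixes \<sigma> :: "'a::finite \<Rightarrow> 'a"
  assumes "bij \<sigma>" and "(`) \<sigma> ` S \<subseteq> T"
  shows "dim (zero_sum_space S) \<le> dim (zero_sum_space T)"
proof -
  have inj: "inj_on (relabel (inv \<sigma>)) A" for A
    using inj_relabel[OF bij_imp_bij_inv[OF assms(1)]] by (rule inj_on_subset) simp
  have "dim (zero_sum_space S) = dim (relabel (inv \<sigma>) ` zero_sum_space S)"
    by (rule dim_image_eq[OF linear_relabel inj, symmetric])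
  also have "\<dots> \<le> dim (zero_sum_space T)"
    using relabel_zero_sum_space[OF assms(1)] zero_sum_space_mono[OF assms(2)]
    by (intro dim_subset) blast
  finally show ?thesis .
qed

definition degree_polytope :: "('a::finite \<Rightarrow> real) \<Rightarrow> (real ^ ('a set)) set" where
  "degree_polytope d = {y. (\<forall>e. e \<notin> all_pairs \<longrightarrow> y $ e = 0) \<and> (\<forall>e. 0 \<le> y $ e \<and> y $ e \<le> 1) \<and>
      (\<forall>v. vertex_sum y v = d v)}"

definition indicator_vec :: "('a::finite) set set \<Rightarrow> real ^ ('a set)" where
  "indicator_vec E = (\<chi> e. if e \<in> E then 1 else 0)"

lemma indicator_vec_nth [simp]: "indicator_vec E $ e = (if e \<in> E then 1 else 0)"
  by (simp add: indicator_vec_def)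

lemma vertex_sum_indicator_vec:
  assumes "simple_graph E"
  shows "vertex_sum (indicator_vec E) v = real (degree E v)"
proof -
  have "{e \<in> all_pairs. v \<in> e} \<inter> {e. e \<in> E} = {e \<in> E. v \<in> e}"
    using assms by (auto simp: simple_graph_def)
  then show ?thesis
    unfolding vertex_sum_def indicator_vec_nth degree_def
    by (simp add: sum.If_cases)
qed

lemma degree_polytope_diff_indicator_in_cone:
  assumes E: "simple_graph E" and y: "y \<in> degree_polytope (\<lambda>v. real (degree E v))"
  shows "flip_sign E (y - indicator_vec E) \<in> alternating_cone_hat E"
  unfolding alternating_cone_hat_iff
proof (intro conjI allI impI)
  fix e :: "'a set"
  show "e \<notin> all_pairs \<Longrightarrow> flip_sign E (y - indicator_vec E) $ e = 0"
    using E y by (auto simp: degree_polytope_def simple_graph_def)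
  show "0 \<le> flip_sign E (y - indicator_vec E) $ e"
    using y by (simp add: degree_polytope_def)
next
  fix v
  show "vertex_sum (flip_sign E (flip_sign E (y - indicator_vec E))) v = 0"
    using y vertex_sum_indicator_vec[OF E] by (simp add: degree_polytope_def)
qed

definition fractional_pairs :: "real ^ ('a::finite set) \<Rightarrow> 'a set set" where
  "fractional_pairs y = {e. y $ e \<notin> {0, 1}}"

lemma fractional_pairs_subset_cone_support:
  assumes "simple_graph E" and "y \<in> degree_polytope (\<lambda>v. real (degree E v))"
  shows "fractional_pairs y \<subseteq> cone_support E"
proof
  fix e assume "e \<in> fractional_pairs y"
  then have "flip_sign E (y - indicator_vec E) $ e \<noteq> 0"
    by (auto simp: fractional_pairs_def split: if_splits)
  with degree_polytope_diff_indicator_in_cone[OF assms] show "e \<in> cone_support E"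
    unfolding cone_support_def by (intro CollectI bexI)
qed

lemma indicator_vec_add_cone_in_degree_polytope:
  assumes E: "simple_graph E" and x: "x \<in> alternating_cone_hat E"
    and t: "0 \<le> t" "\<And>e. t * x $ e \<le> 1"
  shows "indicator_vec E + t *\<^sub>R flip_sign E x \<in> degree_polytope (\<lambda>v. real (degree E v))"
  unfolding degree_polytope_def
proof (intro CollectI conjI allI impI)
  fix e :: "'a set"
  show "e \<notin> all_pairs \<Longrightarrow> (indicator_vec E + t *\<^sub>R flip_sign E x) $ e = 0"
    using E x by (auto simp: simple_graph_def alternating_cone_hat_iff)
  show "0 \<le> (indicator_vec E + t *\<^sub>R flip_sign E x) $ e" "(indicator_vec E + t *\<^sub>R flip_sign E x) $ e \<le> 1"
    using t(1) t(2)[of e] alternating_cone_hat_nonneg[OF x, of e] by simp_all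
next
  fix v
  show "vertex_sum (indicator_vec E + t *\<^sub>R flip_sign E x) v = real (degree E v)"
    using x vertex_sum_indicator_vec[OF E]
    by (simp add: alternating_cone_hat_iff del: flip_sign_nth indicator_vec_nth)
qed

lemma exists_degree_polytope_fractional_on_support:
  assumes E: "simple_graph E"
  obtains y where "y \<in> degree_polytope (\<lambda>v. real (degree E v))" "cone_support E \<subseteq> fractional_pairs y"
proof -
  obtain x where x: "x \<in> alternating_cone_hat E" "\<And>e. e \<in> cone_support E \<Longrightarrow> 0 < x $ e"
    using exists_cone_positive_on_support by blast
  define t where "t = 1 / (1 + (\<Sum>e\<in>UNIV. x $ e))"
  have x_nonneg: "0 \<le> x $ e" for e by (rule alternating_cone_hat_nonneg[OF x(1)])
  have x_le: "x $ e \<le> (\<Sum>e\<in>UNIV. x $ e)" for e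
    by (rule member_le_sum) (simp_all add: x_nonneg)
  have t_pos: "0 < t" using x_le[of undefined] x_nonneg[of undefined] by (simp add: t_def)
  have tx_less: "t * x $ e < 1" for e
    using x_le[of e] x_nonneg[of e] by (simp add: t_def field_simps)
  show thesis
  proof
    show "indicator_vec E + t *\<^sub>R flip_sign E x \<in> degree_polytope (\<lambda>v. real (degree E v))"
      using tx_less t_pos by (intro indicator_vec_add_cone_in_degree_polytope[OF E x(1)]) (auto intro: less_imp_le)
    show "cone_support E \<subseteq> fractional_pairs (indicator_vec E + t *\<^sub>R flip_sign E x)"
    proof
      fix e assume "e \<in> cone_support E"
      then have "0 < t * x $ e" using x(2) t_pos by simp
      with tx_less[of e] show "e \<in> fractional_pairs (indicator_vec E + t *\<^sub>R flip_sign E x)"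
        by (auto simp: fractional_pairs_def)
    qed
  qed
qed

definition fractionally_below :: "('a::finite \<Rightarrow> real) \<Rightarrow> ('a \<Rightarrow> real) \<Rightarrow> bool" where
  "fractionally_below d1 d2 \<longleftrightarrow> (\<exists>\<sigma>. bij \<sigma> \<and>
     (\<forall>y\<in>degree_polytope d1. \<exists>y'\<in>degree_polytope d2. (`) \<sigma> ` fractional_pairs y \<subseteq> fractional_pairs y'))"

lemma fractionally_belowI:
  assumes "bij \<sigma>"
    and "\<And>y. y \<in> degree_polytope d1 \<Longrightarrow> \<exists>y'\<in>degree_polytope d2. (`) \<sigma> ` fractional_pairs y \<subseteq> fractional_pairs y'"
  shows "fractionally_below d1 d2"
  using assms unfolding fractionally_below_def by (intro exI[of _ \<sigma>]) auto

lemma fractionally_below_refl: "fractionally_below d d"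
  by (rule fractionally_belowI[of id]) auto

lemma fractionally_below_trans [trans]:
  assumes "fractionally_below d1 d2" "fractionally_below d2 d3"
  shows "fractionally_below d1 d3"
proof -
  obtain \<sigma>1 where \<sigma>1: "bij \<sigma>1"
    "\<forall>y\<in>degree_polytope d1. \<exists>y'\<in>degree_polytope d2. (`) \<sigma>1 ` fractional_pairs y \<subseteq> fractional_pairs y'"
    using assms(1) unfolding fractionally_below_def by (elim exE conjE)
  obtain \<sigma>2 where \<sigma>2: "bij \<sigma>2"
    "\<forall>y\<in>degree_polytope d2. \<exists>y'\<in>degree_polytope d3. (`) \<sigma>2 ` fractional_pairs y \<subseteq> fractional_pairs y'"
    using assms(2) unfolding fractionally_below_def by (elim exE conjE)
  show ?thesis
  proof (rule fractionally_belowI[OF bij_comp[OF \<sigma>1(1) \<sigma>2(1)]])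
    fix y assume y: "y \<in> degree_polytope d1"
    obtain y' where y': "y' \<in> degree_polytope d2" "(`) \<sigma>1 ` fractional_pairs y \<subseteq> fractional_pairs y'"
      using bspec[OF \<sigma>1(2) y] by (elim bexE)
    obtain y'' where y'': "y'' \<in> degree_polytope d3" "(`) \<sigma>2 ` fractional_pairs y' \<subseteq> fractional_pairs y''"
      using bspec[OF \<sigma>2(2) y'(1)] by (elim bexE)
    have "(`) (\<sigma>2 \<circ> \<sigma>1) ` fractional_pairs y = (`) \<sigma>2 ` (`) \<sigma>1 ` fractional_pairs y"
      by (simp add: image_comp)
    also have "\<dots> \<subseteq> fractional_pairs y''"
      using image_mono[OF y'(2), of "(`) \<sigma>2"] y''(2) by (rule order_trans)
    finally show "\<exists>y''\<in>degree_polytope d3. (`) (\<sigma>2 \<circ> \<sigma>1) ` fractional_pairs y \<subseteq> fractional_pairs y''"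
      using y''(1) by (intro bexI)
  qed
qed

lemma relabel_degree_polytope:
  assumes "bij \<pi>" and y: "y \<in> degree_polytope d"
  shows "relabel \<pi> y \<in> degree_polytope (\<lambda>v. d (\<pi> v))"
  unfolding degree_polytope_def
proof (intro CollectI conjI allI impI)
  fix e :: "'a set"
  assume "e \<notin> all_pairs"
  then have "\<pi> ` e \<notin> all_pairs" using image_in_all_pairs_iff[OF bij_is_inj[OF assms(1)]] by blast
  then show "relabel \<pi> y $ e = 0" using y by (simp add: degree_polytope_def)
next
  fix e :: "'a set"
  show "0 \<le> relabel \<pi> y $ e" "relabel \<pi> y $ e \<le> 1" using y by (simp_all add: degree_polytope_def)
next
  fix v
  show "vertex_sum (relabel \<pi> y) v = d (\<pi> v)"
    using y by (simp add: vertex_sum_relabel[OF assms(1)] degree_polytope_def)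
qed

lemma fractionally_below_relabel:
  assumes "bij \<pi>"
  shows "fractionally_below d (\<lambda>v. d (\<pi> v))"
proof (rule fractionally_belowI[OF bij_imp_bij_inv[OF assms]])
  fix y assume "y \<in> degree_polytope d"
  moreover have "(`) (inv \<pi>) ` fractional_pairs y \<subseteq> fractional_pairs (relabel \<pi> y)"
    using assms by (auto simp: fractional_pairs_def image_comp bij_is_surj surj_f_inv_f)
  ultimately show "\<exists>y'\<in>degree_polytope (\<lambda>v. d (\<pi> v)). (`) (inv \<pi>) ` fractional_pairs y \<subseteq> fractional_pairs y'"
    using relabel_degree_polytope[OF assms] by (intro bexI)
qed

lemma convex_combination_in_degree_polytope:
  assumes "y \<in> degree_polytope d" "y' \<in> degree_polytope d'" "0 \<le> t" "t \<le> 1"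
  shows "t *\<^sub>R y + (1 - t) *\<^sub>R y' \<in> degree_polytope (\<lambda>v. t * d v + (1 - t) * d' v)"
  unfolding degree_polytope_def
proof (intro CollectI conjI allI impI)
  fix e :: "'a set"
  show "e \<notin> all_pairs \<Longrightarrow> (t *\<^sub>R y + (1 - t) *\<^sub>R y') $ e = 0"
    using assms(1,2) by (simp add: degree_polytope_def)
  have "0 \<le> y $ e" "y $ e \<le> 1" "0 \<le> y' $ e" "y' $ e \<le> 1"
    using assms(1,2) by (simp_all add: degree_polytope_def)
  then have "0 \<le> t * y $ e" "t * y $ e \<le> t" "0 \<le> (1 - t) * y' $ e" "(1 - t) * y' $ e \<le> 1 - t"
    using assms(3,4) by (simp_all add: mult_left_le)
  then show "0 \<le> (t *\<^sub>R y + (1 - t) *\<^sub>R y') $ e" "(t *\<^sub>R y + (1 - t) *\<^sub>R y') $ e \<le> 1"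
    by simp_all
next
  fix v
  show "vertex_sum (t *\<^sub>R y + (1 - t) *\<^sub>R y') v = t * d v + (1 - t) * d' v"
    using assms(1,2) by (simp add: degree_polytope_def)
qed

lemma in_01_of_convex_combination:
  fixes t u w :: real
  assumes "0 < t" "t \<le> 1" "0 \<le> u" "u \<le> 1" "0 \<le> w" "w \<le> 1"
    and "t * u + (1 - t) * w \<in> {0, 1}"
  shows "u \<in> {0, 1}"
proof -
  have "0 \<le> (1 - t) * w" "(1 - t) * w \<le> 1 - t"
    using assms(2,5,6) by (simp_all add: mult_left_le)
  then have "t * u \<le> 0 \<or> t * 1 \<le> t * u" using assms(7) by auto
  then show ?thesis using assms(1,3,4) by (auto simp: mult_le_0_iff mult_le_cancel_left)
qed

lemma fractionally_below_mix:
  assumes "bij \<pi>" and t: "0 < t" "t \<le> 1"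
  shows "fractionally_below d (\<lambda>v. t * d v + (1 - t) * d (\<pi> v))"
proof (rule fractionally_belowI[of id])
  fix y assume y: "y \<in> degree_polytope d"
  have yp: "relabel \<pi> y \<in> degree_polytope (\<lambda>v. d (\<pi> v))"
    by (rule relabel_degree_polytope[OF assms(1) y])
  define y' where "y' = t *\<^sub>R y + (1 - t) *\<^sub>R relabel \<pi> y"
  have "y' \<in> degree_polytope (\<lambda>v. t * d v + (1 - t) * d (\<pi> v))"
    unfolding y'_def using t by (intro convex_combination_in_degree_polytope[OF y yp]) simp_all
  moreover have "y $ e \<in> {0, 1}" if "y' $ e \<in> {0, 1}" for e
  proof (rule in_01_of_convex_combination[where w = "relabel \<pi> y $ e"])
    show "0 < t" "t \<le> 1" by (fact t)+
    show "0 \<le> y $ e" "y $ e \<le> 1" using y by (simp_all add: degree_polytope_def)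
    show "0 \<le> relabel \<pi> y $ e" "relabel \<pi> y $ e \<le> 1"
      using yp by (simp_all add: degree_polytope_def del: relabel_nth)
    show "t * y $ e + (1 - t) * relabel \<pi> y $ e \<in> {0, 1}"
      using that by (simp add: y'_def del: relabel_nth)
  qed
  then have "(`) id ` fractional_pairs y \<subseteq> fractional_pairs y'"
    by (auto simp: fractional_pairs_def)
  ultimately show "\<exists>y'\<in>degree_polytope (\<lambda>v. t * d v + (1 - t) * d (\<pi> v)). (`) id ` fractional_pairs y \<subseteq> fractional_pairs y'"
    by (intro bexI)
qed simp

lemma fractionally_below_cone_support:
  assumes E1: "simple_graph E1" and E2: "simple_graph E2"
    and "fractionally_below (\<lambda>v. real (degree E1 v)) (\<lambda>v. real (degree E2 v))"
  obtains \<sigma> where "bij \<sigma>" "(`) \<sigma> ` cone_support E1 \<subseteq> cone_support E2"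
proof -
  obtain \<sigma> where \<sigma>: "bij \<sigma>"
    "\<forall>y\<in>degree_polytope (\<lambda>v. real (degree E1 v)).
       \<exists>y'\<in>degree_polytope (\<lambda>v. real (degree E2 v)). (`) \<sigma> ` fractional_pairs y \<subseteq> fractional_pairs y'"
    using assms(3) unfolding fractionally_below_def by (elim exE conjE)
  obtain y where y: "y \<in> degree_polytope (\<lambda>v. real (degree E1 v))" "cone_support E1 \<subseteq> fractional_pairs y"
    by (rule exists_degree_polytope_fractional_on_support[OF E1])
  obtain y' where y': "y' \<in> degree_polytope (\<lambda>v. real (degree E2 v))"
    "(`) \<sigma> ` fractional_pairs y \<subseteq> fractional_pairs y'"
    using bspec[OF \<sigma>(2) y(1)] by (elim bexE)
  have "(`) \<sigma> ` cone_support E1 \<subseteq> fractional_pairs y'"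
    using image_mono[OF y(2)] y'(2) by (rule order_trans)
  also have "\<dots> \<subseteq> cone_support E2"
    by (rule fractional_pairs_subset_cone_support[OF E2 y'(1)])
  finally show thesis using \<sigma>(1) by (intro that)
qed

definition seq_majorizes :: "nat \<Rightarrow> (nat \<Rightarrow> real) \<Rightarrow> (nat \<Rightarrow> real) \<Rightarrow> bool" where
  "seq_majorizes n a b \<longleftrightarrow>
     (\<forall>m\<le>n. (\<Sum>i<m. b i) \<le> (\<Sum>i<m. a i)) \<and> (\<Sum>i<n. a i) = (\<Sum>i<n. b i)"

lemma sum_lessThan_split:
  fixes f :: "nat \<Rightarrow> 'b::comm_monoid_add"
  shows "m \<le> n \<Longrightarrow> (\<Sum>i<n. f i) = (\<Sum>i<m. f i) + (\<Sum>i = m..<n. f i)"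
  by (metis atLeast0LessThan sum.atLeastLessThan_concat zero_le)

definition mass_transfer :: "(nat \<Rightarrow> real) \<Rightarrow> nat \<Rightarrow> nat \<Rightarrow> real \<Rightarrow> nat \<Rightarrow> real" where
  "mass_transfer a j k \<delta> i = a i - (if i = j then \<delta> else 0) + (if i = k then \<delta> else 0)"

lemma sum_mass_transfer:
  "(\<Sum>i<m. mass_transfer a j k \<delta> i) = (\<Sum>i<m. a i) - (if j < m then \<delta> else 0) + (if k < m then \<delta> else 0)"
  by (simp add: mass_transfer_def sum.distrib sum_subtractf)

lemma mass_transfer_eq_mix:
  assumes "j \<noteq> k" "0 \<le> \<delta>" "\<delta> < a j - a k"
  obtains t where "0 < t" "t \<le> 1"
    "mass_transfer a j k \<delta> = (\<lambda>i. t * a i + (1 - t) * a (Transposition.transpose j k i))"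
proof
  define t where "t = 1 - \<delta> / (a j - a k)"
  show "0 < t" "t \<le> 1" using assms by (simp_all add: t_def field_simps)
  have gap: "(1 - t) * (a j - a k) = \<delta>" using assms by (simp add: t_def)
  have "t * a j + (1 - t) * a k = a j - (1 - t) * (a j - a k)"
    "t * a k + (1 - t) * a j = a k + (1 - t) * (a j - a k)"
    by (simp_all add: algebra_simps)
  with assms(1) show "mass_transfer a j k \<delta> = (\<lambda>i. t * a i + (1 - t) * a (Transposition.transpose j k i))"
    unfolding gap by (auto simp: fun_eq_iff mass_transfer_def Transposition.transpose_def algebra_simps)
qed

lemma seq_majorizes_exists_surplus:
  assumes maj: "seq_majorizes n a b" and ne: "\<exists>i<n. a i \<noteq> b i"
  shows "\<exists>i<n. b i < a i"
proof (rule ccontr)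
  assume "\<not> ?thesis"
  then have "\<forall>i\<in>{..<n}. a i \<le> b i" using not_less by blast
  moreover obtain i where "i < n" "a i < b i" using ne calculation by force
  ultimately have "(\<Sum>i<n. a i) < (\<Sum>i<n. b i)" by (intro sum_strict_mono_ex1) auto
  with maj show False by (simp add: seq_majorizes_def)
qed

lemma seq_majorizes_exists_later_deficit:
  assumes maj: "seq_majorizes n a b" and j: "j < n" "b j < a j"
  shows "\<exists>k. j < k \<and> k < n \<and> a k < b k"
proof (rule ccontr)
  assume no_deficit: "\<not> ?thesis"
  have "(\<Sum>i<j. b i) \<le> (\<Sum>i<j. a i)"
    using maj j(1) by (simp add: seq_majorizes_def)
  then have head: "(\<Sum>i<Suc j. b i) < (\<Sum>i<Suc j. a i)"
    using j(2) by simp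
  have "b i \<le> a i" if "Suc j \<le> i" "i < n" for i
    using no_deficit that by (metis Suc_le_eq not_less)
  then have tail: "(\<Sum>i = Suc j..<n. b i) \<le> (\<Sum>i = Suc j..<n. a i)"
    by (intro sum_mono) auto
  have "(\<Sum>i<n. b i) < (\<Sum>i<n. a i)"
    using head tail sum_lessThan_split[of "Suc j" n a] sum_lessThan_split[of "Suc j" n b] j(1) by simp
  with maj show False by (simp add: seq_majorizes_def)
qed

lemma exists_transfer_pair:
  assumes maj: "seq_majorizes n a b" and ne: "\<exists>i<n. a i \<noteq> b i"
  obtains j k where "j < k" "k < n" "b j < a j" "a k < b k" "\<And>i. j < i \<Longrightarrow> i < k \<Longrightarrow> a i = b i"
proof -
  define j where "j = Max {i. i < n \<and> b i < a i}"
  have "j \<in> {i. i < n \<and> b i < a i}"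
    unfolding j_def using seq_majorizes_exists_surplus[OF maj ne] by (intro Max_in) auto
  then have j: "j < n" "b j < a j" by auto
  have above_j: "a i \<le> b i" if "j < i" "i < n" for i
  proof (rule ccontr)
    assume "\<not> a i \<le> b i"
    then have "i \<le> j" unfolding j_def using that(2) by (intro Max_ge) auto
    with that(1) show False by simp
  qed
  define k where "k = Min {i. j < i \<and> i < n \<and> a i < b i}"
  have "k \<in> {i. j < i \<and> i < n \<and> a i < b i}"
    unfolding k_def using seq_majorizes_exists_later_deficit[OF maj j] by (intro Min_in) auto
  then have k: "j < k" "k < n" "a k < b k" by auto
  have "a i = b i" if "j < i" "i < k" for i
  proof -
    have "\<not> a i < b i"
    proof
      assume "a i < b i"
      then have "k \<le> i" unfolding k_def using that k(2) by (intro Min_le) auto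
      with that(2) show False by simp
    qed
    with above_j[of i] that k(2) show ?thesis by simp
  qed
  with j k show thesis by (intro that) auto
qed

lemma mass_transfer_majorizes:
  assumes maj: "seq_majorizes n a b" and jk: "j < k" "k < n"
    and between: "\<And>i. j < i \<Longrightarrow> i < k \<Longrightarrow> a i = b i" and \<delta>: "\<delta> \<le> a j - b j"
  shows "seq_majorizes n (mass_transfer a j k \<delta>) b"
  unfolding seq_majorizes_def
proof (intro conjI allI impI)
  fix m assume "m \<le> n"
  show "(\<Sum>i<m. b i) \<le> (\<Sum>i<m. mass_transfer a j k \<delta> i)"
  proof (cases "j < m \<and> m \<le> k")
    case True
    have split: "(\<Sum>i<m. f i) = (\<Sum>i<j. f i) + f j + (\<Sum>i = Suc j..<m. f i)" for f :: "nat \<Rightarrow> real"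
      using sum_lessThan_split[of "Suc j" m f] True by simp
    have "(\<Sum>i = Suc j..<m. a i) = (\<Sum>i = Suc j..<m. b i)"
      using True between by (intro sum.cong) auto
    moreover have "(\<Sum>i<j. b i) \<le> (\<Sum>i<j. a i)" using maj jk by (simp add: seq_majorizes_def)
    ultimately show ?thesis
      using True \<delta> split[of a] split[of b] by (simp add: sum_mass_transfer)
  next
    case False
    then have "(\<Sum>i<m. mass_transfer a j k \<delta> i) = (\<Sum>i<m. a i)"
      using jk by (auto simp: sum_mass_transfer)
    then show ?thesis using maj \<open>m \<le> n\<close> by (simp add: seq_majorizes_def)
  qed
next
  show "(\<Sum>i<n. mass_transfer a j k \<delta> i) = (\<Sum>i<n. b i)"
    using maj jk by (simp add: sum_mass_transfer seq_majorizes_def)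
qed

lemma mass_transfer_lower_bound:
  assumes a: "antimono_on {..<n} a" and b: "antimono_on {..<n} b"
    and jk: "j < k" "k < n" and \<delta>: "0 \<le> \<delta>" "b j \<le> a j - \<delta>"
    and between: "\<And>i. j < i \<Longrightarrow> i < k \<Longrightarrow> a i = b i" and p: "p < k"
  shows "b k \<le> mass_transfer a j k \<delta> p"
proof -
  have b_k: "b k \<le> b i" if "i \<le> k" for i using monotone_onD[OF b] that jk by auto
  consider "p < j" | "p = j" | "j < p" by linarith
  then show ?thesis
  proof cases
    case 1
    then have "a j \<le> a p" using monotone_onD[OF a] jk by auto
    with 1 p \<delta> b_k[of j] jk show ?thesis by (simp add: mass_transfer_def)
  next
    case 2
    with \<delta> b_k[of j] jk show ?thesis by (simp add: mass_transfer_def)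
  qed (use p between[of p] b_k[of p] in \<open>simp add: mass_transfer_def\<close>)
qed

lemma mass_transfer_upper_bound:
  assumes a: "antimono_on {..<n} a" and b: "antimono_on {..<n} b"
    and jk: "j < k" "k < n" and \<delta>: "0 \<le> \<delta>" "a k + \<delta> \<le> b k"
    and between: "\<And>i. j < i \<Longrightarrow> i < k \<Longrightarrow> a i = b i" and q: "j < q" "q < n"
  shows "mass_transfer a j k \<delta> q \<le> b j"
proof -
  have b_j: "b i \<le> b j" if "j \<le> i" "i < n" for i using monotone_onD[OF b] that by auto
  consider "q < k" | "q = k" | "k < q" by linarith
  then show ?thesis
  proof cases
    case 1
    with q between[of q] b_j[of q] show ?thesis by (simp add: mass_transfer_def)
  next
    case 2
    with \<delta> b_j[of k] jk show ?thesis by (simp add: mass_transfer_def)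
  next
    case 3
    then have "a q \<le> a k" using monotone_onD[OF a] q by auto
    with 3 q \<delta> b_j[of k] jk show ?thesis by (simp add: mass_transfer_def)
  qed
qed

lemma mass_transfer_antimono:
  assumes a: "antimono_on {..<n} a" and b: "antimono_on {..<n} b"
    and jk: "j < k" "k < n" and \<delta>: "0 \<le> \<delta>" "b j \<le> a j - \<delta>" "a k + \<delta> \<le> b k"
    and between: "\<And>i. j < i \<Longrightarrow> i < k \<Longrightarrow> a i = b i"
  shows "antimono_on {..<n} (mass_transfer a j k \<delta>)"
proof (rule monotone_onI)
  let ?a' = "mass_transfer a j k \<delta>"
  fix p q assume pq: "p \<in> {..<n}" "q \<in> {..<n}" "p \<le> q"
  consider "p = q" | "p < q" "q = k" | "p < q" "q \<noteq> k" "p = j" | "p < q" "q \<noteq> k" "p \<noteq> j"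
    using pq(3) by linarith
  then show "?a' q \<le> ?a' p"
  proof cases
    case 2
    then have "b k \<le> ?a' p" using mass_transfer_lower_bound[OF a b jk \<delta>(1,2) between] by simp
    with 2 \<delta>(3) jk show ?thesis by (simp add: mass_transfer_def)
  next
    case 3
    then have "?a' q \<le> b j" using mass_transfer_upper_bound[OF a b jk \<delta>(1,3) between] pq(2) by simp
    with 3 \<delta>(2) jk show ?thesis by (simp add: mass_transfer_def)
  next
    case 4
    then have "?a' q \<le> a q" "a p \<le> ?a' p" using \<delta>(1) by (auto simp: mass_transfer_def)
    moreover have "a q \<le> a p" using monotone_onD[OF a pq] .
    ultimately show ?thesis by simp
  qed simp
qed

lemma card_disagreements_mass_transfer:
  assumes "j < n" "k < n" "j \<noteq> k" "b j < a j" "a k < b k"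
  shows "card {i. i < n \<and> mass_transfer a j k (min (a j - b j) (b k - a k)) i \<noteq> b i}
    < card {i. i < n \<and> a i \<noteq> b i}"
proof (rule psubset_card_mono)
  let ?a' = "mass_transfer a j k (min (a j - b j) (b k - a k))"
  have "{i. i < n \<and> ?a' i \<noteq> b i} \<subseteq> {i. i < n \<and> a i \<noteq> b i}"
    using assms by (auto simp: mass_transfer_def split: if_splits)
  moreover have "?a' j = b j \<or> ?a' k = b k"
    using assms by (auto simp: mass_transfer_def min_def)
  ultimately show "{i. i < n \<and> ?a' i \<noteq> b i} \<subset> {i. i < n \<and> a i \<noteq> b i}"
    using assms by auto
qed simp

lemma majorization_transfer_induct:
  fixes R :: "(nat \<Rightarrow> real) \<Rightarrow> (nat \<Rightarrow> real) \<Rightarrow> bool"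
  assumes "antimono_on {..<n} a" "antimono_on {..<n} b" "seq_majorizes n a b"
    and eq: "\<And>a. (\<And>i. i < n \<Longrightarrow> a i = b i) \<Longrightarrow> R a b"
    and trans: "\<And>a a' c. R a a' \<Longrightarrow> R a' c \<Longrightarrow> R a c"
    and transfer: "\<And>a j k t. j < n \<Longrightarrow> k < n \<Longrightarrow> 0 < t \<Longrightarrow> t \<le> 1 \<Longrightarrow>
      R a (\<lambda>i. t * a i + (1 - t) * a (Transposition.transpose j k i))"
  shows "R a b"
  using assms(1,3)
proof (induction "card {i. i < n \<and> a i \<noteq> b i}" arbitrary: a rule: less_induct)
  case less
  show ?case
  proof (cases "\<exists>i<n. a i \<noteq> b i")
    case False
    then show ?thesis by (intro eq) auto
  next
    case True
    then obtain j k where jk: "j < k" "k < n" "b j < a j" "a k < b k"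
      and between: "\<And>i. j < i \<Longrightarrow> i < k \<Longrightarrow> a i = b i"
      using exists_transfer_pair[OF less.prems(2)] by blast
    define \<delta> where "\<delta> = min (a j - b j) (b k - a k)"
    have "b k \<le> b j" using monotone_onD[OF assms(2)] jk by auto
    then have \<delta>: "0 \<le> \<delta>" "\<delta> < a j - a k" using jk by (auto simp: \<delta>_def)
    let ?a' = "mass_transfer a j k \<delta>"
    have "R ?a' b"
    proof (rule less.hyps)
      show "card {i. i < n \<and> ?a' i \<noteq> b i} < card {i. i < n \<and> a i \<noteq> b i}"
        unfolding \<delta>_def using jk by (intro card_disagreements_mass_transfer) auto
      show "antimono_on {..<n} ?a'"
        using jk \<delta>(1) between by (intro mass_transfer_antimono[OF less.prems(1) assms(2)]) (auto simp: \<delta>_def)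
      show "seq_majorizes n ?a' b"
        using jk between by (intro mass_transfer_majorizes[OF less.prems(2)]) (auto simp: \<delta>_def)
    qed
    moreover obtain t where "0 < t" "t \<le> 1"
      "?a' = (\<lambda>i. t * a i + (1 - t) * a (Transposition.transpose j k i))"
      using mass_transfer_eq_mix[OF _ \<delta>] jk(1) by blast
    then have "R a ?a'" using transfer[of j k t a] jk by simp
    ultimately show ?thesis by (rule trans[rotated])
  qed
qed

lemma sum_list_take_eq_sum_nth:
  assumes "m \<le> length xs"
  shows "sum_list (take m xs) = (\<Sum>i<m. (xs ! i :: 'b::comm_monoid_add))"
proof -
  have "sum_list (take m xs) = (\<Sum>i<m. take m xs ! i)"
    using assms by (simp add: sum_list_sum_nth atLeast0LessThan min_def)
  also have "\<dots> = (\<Sum>i<m. xs ! i)" by (rule sum.cong) auto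
  finally show ?thesis .
qed

lemma mset_decr_sort [simp]: "mset (decr_sort xs) = mset xs"
  by (simp add: decr_sort_def)

lemma length_decr_sort [simp]: "length (decr_sort xs) = length xs"
  by (simp add: decr_sort_def)

lemma sum_list_decr_sort: "sum_list (decr_sort xs) = sum_list xs"
  by (metis mset_decr_sort sum_mset_sum_list)

lemma antimono_decr_sort_nth: "antimono_on {..<length xs} ((!) (decr_sort xs))"
proof (rule monotone_onI)
  fix i j assume "i \<in> {..<length xs}" "j \<in> {..<length xs}" "i \<le> j"
  then show "decr_sort xs ! j \<le> decr_sort xs ! i"
    by (auto simp: decr_sort_def rev_nth intro: sorted_nth_mono)
qed

lemma seq_majorizes_decr_sort:
  assumes "majorizes xs ys"
  shows "seq_majorizes (length xs) ((!) (decr_sort xs)) ((!) (decr_sort ys))"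
  unfolding seq_majorizes_def
proof (intro conjI allI impI)
  have len: "length ys = length xs" using assms by (simp add: majorizes_def)
  fix m assume m: "m \<le> length xs"
  show "(\<Sum>i<m. decr_sort ys ! i) \<le> (\<Sum>i<m. decr_sort xs ! i)"
  proof (cases "m = 0")
    case False
    with m assms have "sum_list (take m (decr_sort ys)) \<le> sum_list (take m (decr_sort xs))"
      by (simp add: majorizes_def)
    with m len show ?thesis by (simp add: sum_list_take_eq_sum_nth)
  qed simp
next
  have len: "length ys = length xs" using assms by (simp add: majorizes_def)
  have "(\<Sum>i<length xs. decr_sort xs ! i) = sum_list xs"
    using sum_list_take_eq_sum_nth[of "length xs" "decr_sort xs"] by (simp add: sum_list_decr_sort)
  also have "\<dots> = sum_list ys" using assms by (simp add: majorizes_def)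
  also have "\<dots> = (\<Sum>i<length xs. decr_sort ys ! i)"
    using sum_list_take_eq_sum_nth[of "length ys" "decr_sort ys"] len by (simp add: sum_list_decr_sort)
  finally show "(\<Sum>i<length xs. decr_sort xs ! i) = (\<Sum>i<length xs. decr_sort ys ! i)" .
qed

lemma exists_permutes_eq_nth:
  fixes d :: "'a::finite \<Rightarrow> 'b"
  assumes xs: "mset xs = image_mset d (mset_set UNIV)" and \<iota>: "bij_betw \<iota> UNIV {..<length xs}"
  obtains p where "p permutes UNIV" "\<And>v. d v = xs ! \<iota> (p v)"
proof -
  have "image_mset (\<lambda>v. xs ! \<iota> v) (mset_set UNIV) = image_mset ((!) xs) (image_mset \<iota> (mset_set UNIV))"
    by (simp add: multiset.map_comp comp_def)
  also have "image_mset \<iota> (mset_set UNIV) = mset_set {..<length xs}"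
    using \<iota> by (simp add: image_mset_mset_set bij_betw_def)
  also have "image_mset ((!) xs) (mset_set {..<length xs}) = mset xs"
    by (metis atLeast0LessThan map_nth mset_map mset_upt)
  finally have "image_mset d (mset_set UNIV) = image_mset (\<lambda>v. xs ! \<iota> v) (mset_set UNIV)"
    using xs by simp
  then obtain p where "p permutes UNIV" "\<forall>v\<in>UNIV. d v = xs ! \<iota> (p v)"
    by (rule image_mset_eq_implies_permutes[OF finite])
  then show thesis by (intro that) auto
qed

lemma inj_transpose_apply:
  "inj f \<Longrightarrow> f (Transposition.transpose a b x) = Transposition.transpose (f a) (f b) (f x)"
  by (auto simp: Transposition.transpose_def dest: injD)

lemma fractionally_below_sorted:
  fixes \<iota> :: "'a::finite \<Rightarrow> nat"
  assumes \<iota>: "bij_betw \<iota> UNIV {..<n}"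
    and "antimono_on {..<n} a" "antimono_on {..<n} b" "seq_majorizes n a b"
  shows "fractionally_below (\<lambda>v. a (\<iota> v)) (\<lambda>v. b (\<iota> v))"
  using assms(2-4)
proof (rule majorization_transfer_induct[where R = "\<lambda>a b. fractionally_below (\<lambda>v. a (\<iota> v)) (\<lambda>v. b (\<iota> v))"])
  have \<iota>_less: "\<iota> v < n" for v using bij_betwE[OF \<iota>] by auto
  fix a' assume "\<And>i. i < n \<Longrightarrow> a' i = b i"
  then have "(\<lambda>v. a' (\<iota> v)) = (\<lambda>v. b (\<iota> v))" using \<iota>_less by auto
  then show "fractionally_below (\<lambda>v. a' (\<iota> v)) (\<lambda>v. b (\<iota> v))" by (simp add: fractionally_below_refl)
next
  fix a' j k and t :: real
  assume jk: "j < n" "k < n" and t: "0 < t" "t \<le> 1"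
  define h where "h = inv_into UNIV \<iota>"
  have \<iota>_h: "\<iota> (h i) = i" if "i < n" for i
    using \<iota> that by (simp add: h_def bij_betw_inv_into_right)
  have "(\<lambda>v. t * a' (\<iota> v) + (1 - t) * a' (\<iota> (Transposition.transpose (h j) (h k) v)))
      = (\<lambda>v. t * a' (\<iota> v) + (1 - t) * a' (Transposition.transpose j k (\<iota> v)))"
    using inj_transpose_apply[OF bij_betw_imp_inj_on[OF \<iota>]] \<iota>_h jk by simp
  then show "fractionally_below (\<lambda>v. a' (\<iota> v))
      (\<lambda>v. t * a' (\<iota> v) + (1 - t) * a' (Transposition.transpose j k (\<iota> v)))"
    using fractionally_below_mix[where d = "\<lambda>v. a' (\<iota> v)", OF bij_transpose[of "h j" "h k"] t] by simp
qed (rule fractionally_below_trans)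

lemma fractionally_below_of_majorizes:
  fixes d1 d2 :: "'a::finite \<Rightarrow> real"
  assumes d1: "mset xs = image_mset d1 (mset_set UNIV)" and d2: "mset ys = image_mset d2 (mset_set UNIV)"
    and maj: "majorizes xs ys"
  shows "fractionally_below d1 d2"
proof -
  let ?a = "(!) (decr_sort xs)" and ?b = "(!) (decr_sort ys)"
  have len: "length xs = CARD('a)" "length ys = CARD('a)"
    using arg_cong[OF d1, of size] arg_cong[OF d2, of size] by simp_all
  obtain \<iota> :: "'a \<Rightarrow> nat" where \<iota>: "bij_betw \<iota> UNIV {..<CARD('a)}"
    using ex_bij_betw_finite_nat[of "UNIV :: 'a set"] by (auto simp: atLeast0LessThan)
  obtain p1 where p1: "p1 permutes UNIV" "\<And>v. d1 v = ?a (\<iota> (p1 v))"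
    using exists_permutes_eq_nth[of "decr_sort xs" d1 \<iota>] d1 \<iota> len by auto
  obtain p2 where p2: "p2 permutes UNIV" "\<And>v. d2 v = ?b (\<iota> (p2 v))"
    using exists_permutes_eq_nth[of "decr_sort ys" d2 \<iota>] d2 \<iota> len by auto
  have "fractionally_below d1 (\<lambda>v. d1 (inv p1 v))"
    using p1(1) by (intro fractionally_below_relabel bij_imp_bij_inv permutes_bij)
  also have "(\<lambda>v. d1 (inv p1 v)) = (\<lambda>v. ?a (\<iota> v))"
    using p1 by (simp add: permutes_inverses(1))
  also have "fractionally_below \<dots> (\<lambda>v. ?b (\<iota> v))"
    using \<iota> antimono_decr_sort_nth[of xs] antimono_decr_sort_nth[of ys] seq_majorizes_decr_sort[OF maj] len
    by (intro fractionally_below_sorted) simp_all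
  also have "fractionally_below \<dots> (\<lambda>v. ?b (\<iota> (p2 v)))"
    by (rule fractionally_below_relabel[OF permutes_bij[OF p2(1)]])
  also have "(\<lambda>v. ?b (\<iota> (p2 v))) = d2"
    using p2(2) by auto
  finally show ?thesis .
qed

theorem theorem2p10:
  fixes E1 E2 :: "('a::finite) set set"
  assumes "simple_graph E1" and "simple_graph E2"
    and "majorizes (degree_seq E1) (degree_seq E2)"
  shows "dim (alternating_cone_hat E1) \<le> dim (alternating_cone_hat E2)"
proof -
  have mset_degree_seq: "mset (degree_seq E) = image_mset (\<lambda>v. real (degree E v)) (mset_set UNIV)"
    for E :: "'a set set"
    by (simp add: degree_seq_def)
  have "fractionally_below (\<lambda>v. real (degree E1 v)) (\<lambda>v. real (degree E2 v))"
    using mset_degree_seq[of E1] mset_degree_seq[of E2] assms(3) by (rule fractionally_below_of_majorizes)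
  then obtain \<sigma> where "bij \<sigma>" "(`) \<sigma> ` cone_support E1 \<subseteq> cone_support E2"
    by (rule fractionally_below_cone_support[OF assms(1,2)])
  then show ?thesis
    unfolding dim_alternating_cone_hat by (rule dim_zero_sum_space_le)
qed

end
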